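(* Let $N\ge2$ and let $a_i=(\alpha_i,N)$, $i=1,\dots,m$, be transpositions in $S_N$ with $1\le\alpha_i\le N-1$, such that the partition $\pi$ of $\{1,\dots,m\}$ defined by $j\sim k\iff a_j=a_k$ belongs to $NC_{1,2}(m)$. Let $i_1<\dots<i_k$ be the elements of those one-element blocks of $\pi$ that are not inner blocks of any two-element block. Then the cycle decomposition of $\sigma=a_1\cdots a_m$ is as follows: (i) if $k\ge1$, $\sigma$ has the cycle $(N,\alpha_{i_k},\alpha_{i_{k-1}},\dots,\alpha_{i_1})$; if $k=0$, $N$ is a fixed point of $\sigma$; (ii) for every two-element block $\{p,r\}$ of $\pi$ having at least one direct inner one-element block, with the direct inner one-element blocks being $\{j_1\},\dots,\{j_l\}$, $j_1<\dots<j_l$, $\sigma$ has the cycle $(\alpha_r,\alpha_{j_l},\dots,\alpha_{j_1})$ (here $\alpha_r=\alpha_p$); (iii) these are all the nontrivial cycles of $\sigma$; all other points are fixed.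
   Context: Products of permutations are compositions, rightmost factor acting first; a cycle $(x_1,x_2,\dots,x_t)$ maps $x_1\mapsto x_2\mapsto\dots\mapsto x_t\mapsto x_1$. $NC_{1,2}(m)$ is the set of non-crossing partitions of $\{1,\dots,m\}$ all of whose blocks have one or two elements (non-crossing: no $k_1<l_1<k_2<l_2$ with $k_1,k_2$ in one block and $l_1,l_2$ in another). A block $B$ is an inner block of a block $B'$ if $B'$ contains an element smaller than all elements of $B$ and an element larger than all elements of $B$. $B$ is a direct inner block of $B''$ if $B$ is an inner block of $B''$ and there is no block $B'$ such that $B$ is an inner block of $B'$ and $B'$ is an inner block of $B''$. *)

theory Defs
  imports Main "HOL-Combinatorics.Transposition" "HOL-Library.Disjoint_Sets"
begin

definition noncrossing :: "nat set set \<Rightarrow> bool" where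
  "noncrossing P \<longleftrightarrow> (\<forall>B\<in>P. \<forall>B'\<in>P. B \<noteq> B' \<longrightarrow>
     \<not> (\<exists>k1 l1 k2 l2. k1 < l1 \<and> l1 < k2 \<and> k2 < l2 \<and> k1 \<in> B \<and> k2 \<in> B \<and> l1 \<in> B' \<and> l2 \<in> B'))"

definition NC12 :: "nat \<Rightarrow> nat set set set" where
  "NC12 m = {P. partition_on {1..m} P \<and> (\<forall>B\<in>P. card B = 1 \<or> card B = 2) \<and> noncrossing P}"

definition inner_block :: "nat set \<Rightarrow> nat set \<Rightarrow> bool" where
  "inner_block B B' \<longleftrightarrow> (\<exists>x\<in>B'. \<forall>y\<in>B. x < y) \<and> (\<exists>x\<in>B'. \<forall>y\<in>B. y < x)"

definition direct_inner_block :: "nat set set \<Rightarrow> nat set \<Rightarrow> nat set \<Rightarrow> bool" where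
  "direct_inner_block P B B'' \<longleftrightarrow> inner_block B B'' \<and>
     \<not> (\<exists>B'\<in>P. inner_block B B' \<and> inner_block B' B'')"

text \<open>The partition of {1..m} given by j ~ k iff a_j = a_k (a_j = (alpha_j, N), alpha_j < N).\<close>
definition kernel_partition :: "(nat \<Rightarrow> nat) \<Rightarrow> nat \<Rightarrow> nat set set" where
  "kernel_partition \<alpha> m = {{k\<in>{1..m}. \<alpha> k = \<alpha> j} | j. j \<in> {1..m}}"

text \<open>Product a_1 a_2 ... a_m (composition, rightmost factor acts first).\<close>
definition transp_product :: "nat \<Rightarrow> (nat \<Rightarrow> nat) \<Rightarrow> nat \<Rightarrow> nat \<Rightarrow> nat" where
  "transp_product N \<alpha> m = foldr (\<circ>) (map (\<lambda>i. transpose (\<alpha> i) N) [1..<Suc m]) id"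

definition has_cycle :: "(nat \<Rightarrow> nat) \<Rightarrow> nat list \<Rightarrow> bool" where
  "has_cycle \<sigma> xs \<longleftrightarrow> xs \<noteq> [] \<and> distinct xs \<and>
     (\<forall>i < length xs. \<sigma> (xs ! i) = xs ! ((i + 1) mod length xs))"

definition outer_singletons :: "nat set set \<Rightarrow> nat set" where
  "outer_singletons P = {i. {i} \<in> P \<and> \<not> (\<exists>B\<in>P. card B = 2 \<and> inner_block {i} B)}"

definition direct_inner_singletons :: "nat set set \<Rightarrow> nat set \<Rightarrow> nat set" where
  "direct_inner_singletons P B = {j. {j} \<in> P \<and> direct_inner_block P {j} B}"

definition outer_cycle :: "nat \<Rightarrow> (nat \<Rightarrow> nat) \<Rightarrow> nat set set \<Rightarrow> nat list" where
  "outer_cycle N \<alpha> P = N # rev (map \<alpha> (sorted_list_of_set (outer_singletons P)))"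

definition block_cycle :: "(nat \<Rightarrow> nat) \<Rightarrow> nat set set \<Rightarrow> nat set \<Rightarrow> nat list" where
  "block_cycle \<alpha> P B = \<alpha> (Max B) # rev (map \<alpha> (sorted_list_of_set (direct_inner_singletons P B)))"

end

theory Submission
  imports Defs
begin

(*
  Write sigma_k = a_1 ... a_k, so that sigma_k = sigma_{k-1} o a_k.  A point v <> N is
  moved only by the factors a_i with alpha_i = v, so if i is the last such index then
  sigma_m v = sigma_{i-1} N: everything reduces to computing sigma_k N.  Call i visible
  at time k if i <= k, the partner of i (if any) comes after k, and no pair {p,q} with
  q <= k encloses i.  The central result sigma_prefix_N says that sigma_k N is alpha_i
  for the largest visible i, or N if there is none; it is proved by induction on k,
  since closing a pair {p,k} makes visibility at time k equal to visibility at p - 1.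
  Evaluated just before an outer singleton, a direct inner singleton, or the right end
  of a pair, "the largest visible index" is the preceding singleton of the same cycle.
*)

section \<open>Cycles given by a predecessor map\<close>

lemma has_cycle_chain:
  fixes L :: "nat list"
  assumes srt: "sorted_wrt (<) L" and ne: "L \<noteq> []" and inj: "inj_on f (set L)"
    and h: "h \<notin> f ` set L" and h_step: "\<sigma> h = f (last L)"
    and step: "\<And>t. t < length L \<Longrightarrow> \<sigma> (f (L!t)) = (if t = 0 then h else f (L!(t-1)))"
  shows "has_cycle \<sigma> (h # rev (map f L))"
proof -
  let ?xs = "h # rev (map f L)"
  define n where "n = length L"
  have n1: "n \<ge> 1" using ne n_def by (cases L) auto
  have dist: "distinct ?xs" using srt inj h by (auto simp: strict_sorted_iff distinct_map)
  have len: "length ?xs = Suc n" by (simp add: n_def)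
  have nth: "?xs ! Suc s = f (L ! (n - 1 - s))" if "s < n" for s
    using that by (simp add: rev_nth n_def)
  have "\<sigma> (?xs ! i) = ?xs ! ((i + 1) mod length ?xs)" if "i < length ?xs" for i
  proof (cases i)
    case 0
    have "last L = L ! (n - 1)" using ne by (simp add: last_conv_nth n_def)
    then show ?thesis using 0 n1 h_step nth[of 0] len by (cases "n = 1") auto
  next
    case (Suc s)
    have s: "s < n" using that Suc len by simp
    have img: "\<sigma> (?xs ! i) = (if n - 1 - s = 0 then h else f (L!(n - 1 - s - 1)))"
      using Suc nth[OF s] step[of "n - 1 - s"] s n_def by auto
    show ?thesis
    proof (cases "s = n - 1")
      case True
      then have "(i+1) mod length ?xs = 0" using Suc len n1 by simp
      then show ?thesis using img True by simp
    next
      case False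
      then have s2: "Suc s < n" using s by simp
      have "(i+1) mod length ?xs = Suc (Suc s)" using Suc len s2 by simp
      moreover have "n - 1 - s \<noteq> 0" "n - 1 - s - 1 = n - 1 - Suc s" using s2 by auto
      ultimately show ?thesis using img nth[OF s2] by simp
    qed
  qed
  then show ?thesis unfolding has_cycle_def using dist by simp
qed

lemma has_cycle_predecessor:
  fixes S :: "nat set"
  assumes fin: "finite S" and ne: "S \<noteq> {}" and inj: "inj_on f S"
    and h: "h \<notin> f ` S" and h_step: "\<sigma> h = f (Max S)"
    and step: "\<forall>j\<in>S. \<sigma> (f j) = (if \<exists>i\<in>S. i < j then f (Max {i\<in>S. i < j}) else h)"
  shows "has_cycle \<sigma> (h # rev (map f (sorted_list_of_set S)))"
proof -
  define L where "L = sorted_list_of_set S"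
  have srt: "sorted_wrt (<) L" unfolding L_def by (rule strict_sorted_list_of_set)
  have mono: "L!u \<le> L!t" if "u \<le> t" "t < length L" for u t
    using sorted_nth_mono[OF strict_sorted_imp_sorted[OF srt] that] .
  have setL: "set L = S" unfolding L_def using fin by simp
  have Lne: "L \<noteq> []" using setL ne by auto
  have inS: "\<And>i. i \<in> S \<Longrightarrow> \<exists>u<length L. i = L!u" using setL by (metis in_set_conv_nth)
  have last: "last L = Max S"
  proof (rule sym, rule Max_eqI[OF fin])
    show "last L \<in> S" using Lne setL by auto
    fix y assume "y \<in> S"
    then obtain u where "u < length L" "y = L!u" using inS by blast
    then show "y \<le> last L" using mono[of u "length L - 1"] Lne by (simp add: last_conv_nth)
  qed
  have L_step: "\<sigma> (f (L!t)) = (if t = 0 then h else f (L!(t-1)))" if t: "t < length L" for t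
  proof -
    have Lt: "L!t \<in> S" using t setL by auto
    have below: "\<exists>u<t. i = L!u" if "i \<in> S" "i < L!t" for i
      using inS[OF that(1)] mono[of t _] t that(2) by (metis leD le_less_linear)
    show ?thesis
    proof (cases t)
      case 0
      then have "\<not> (\<exists>i\<in>S. i < L!t)" using below by blast
      then show ?thesis using step Lt 0 by auto
    next
      case (Suc t')
      have prev: "L!t' \<in> S" "L!t' < L!t"
        using Suc t setL sorted_wrt_nth_less[OF srt, of t' t] by auto
      have "Max {i\<in>S. i < L!t} = L!t'"
      proof (rule Max_eqI)
        show "finite {i\<in>S. i < L!t}" using fin by simp
        show "L!t' \<in> {i\<in>S. i < L!t}" using prev by simp
        fix y assume "y \<in> {i\<in>S. i < L!t}"
        then obtain u where "u < t" "y = L!u" using below by blast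
        then show "y \<le> L!t'" using mono[of u t'] Suc t by simp
      qed
      then show ?thesis using step Lt prev Suc by auto
    qed
  qed
  show ?thesis unfolding L_def[symmetric]
    by (rule has_cycle_chain[OF srt Lne]) (use inj h h_step setL last L_step in auto)
qed

text \<open>The maximum of a finite set which contains \<open>p\<close> and above \<open>p\<close> agrees with \<open>D\<close>; this locates
  the topmost visible index inside a pair, the left end of the pair serving as \<open>p\<close>.\<close>
lemma Max_above_pivot:
  fixes Q :: "nat \<Rightarrow> bool"
  assumes fin: "finite {i. Q i}" and Qp: "Q p" and above: "\<And>i. p < i \<Longrightarrow> Q i \<longleftrightarrow> i \<in> D"
    and D_gt: "\<And>i. i \<in> D \<Longrightarrow> p < i"
  shows "Max {i. Q i} = (if D = {} then p else Max D)"
proof -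
  have DQ: "D \<subseteq> {i. Q i}" using above D_gt by auto
  have finD: "finite D" using finite_subset[OF DQ fin] .
  show ?thesis
  proof (cases "D = {}")
    case True
    have "Max {i. Q i} = p"
    proof (rule Max_eqI[OF fin])
      fix y assume "y \<in> {i. Q i}" then show "y \<le> p" using above True by (cases "p < y") auto
    qed (use Qp in auto)
    then show ?thesis using True by simp
  next
    case False
    have MD: "Max D \<in> D" using Max_in[OF finD False] .
    have "Max {i. Q i} = Max D"
    proof (rule Max_eqI[OF fin])
      show "Max D \<in> {i. Q i}" using MD DQ by auto
      fix y assume y: "y \<in> {i. Q i}"
      show "y \<le> Max D"
        using above y Max_ge[OF finD] D_gt[OF MD] by (cases "p < y") auto
    qed
    then show ?thesis using False by simp
  qed
qed

section \<open>Products of transpositions\<close>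

lemma foldr_comp_id: "foldr (\<circ>) fs g = foldr (\<circ>) fs id \<circ> g"
  by (induction fs) (auto simp: comp_assoc)

lemma transp_product_0: "transp_product N \<alpha> 0 = id"
  by (simp add: transp_product_def)

lemma transp_product_Suc:
  "transp_product N \<alpha> (Suc k) = transp_product N \<alpha> k \<circ> transpose (\<alpha> (Suc k)) N"
proof -
  have "[1..<Suc (Suc k)] = [1..<Suc k] @ [Suc k]" by simp
  then show ?thesis unfolding transp_product_def
    by (simp del: upt_Suc) (subst foldr_comp_id, simp)
qed

lemma transp_product_skip:
  assumes "v \<noteq> N" and "j \<le> k" and "\<forall>i. j < i \<and> i \<le> k \<longrightarrow> \<alpha> i \<noteq> v"
  shows "transp_product N \<alpha> k v = transp_product N \<alpha> j v"
  using assms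
proof (induction k)
  case (Suc k)
  show ?case
  proof (cases "j = Suc k")
    case False
    then have "j \<le> k" "\<alpha> (Suc k) \<noteq> v" using Suc.prems by auto
    then have "transp_product N \<alpha> k v = transp_product N \<alpha> j v" using Suc by simp
    then show ?thesis using \<open>\<alpha> (Suc k) \<noteq> v\<close> Suc.prems(1) by (simp add: transp_product_Suc)
  qed simp
qed simp

locale nc_transpositions =
  fixes N m :: nat and \<alpha> :: "nat \<Rightarrow> nat"
  assumes alpha_ne_N: "\<And>i. i \<in> {1..m} \<Longrightarrow> \<alpha> i \<noteq> N"
    and at_most_two: "\<And>i j k. i \<in> {1..m} \<Longrightarrow> j \<in> {1..m} \<Longrightarrow> k \<in> {1..m} \<Longrightarrow>
      \<alpha> i = \<alpha> j \<Longrightarrow> \<alpha> i = \<alpha> k \<Longrightarrow> i = j \<or> i = k \<or> j = k"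
    and no_crossing: "\<And>a b c d. 1 \<le> a \<Longrightarrow> a < b \<Longrightarrow> b < c \<Longrightarrow> c < d \<Longrightarrow> d \<le> m \<Longrightarrow>
      \<alpha> a = \<alpha> c \<Longrightarrow> \<alpha> b = \<alpha> d \<Longrightarrow> False"
begin

abbreviation sigma :: "nat \<Rightarrow> nat \<Rightarrow> nat" where
  "sigma k \<equiv> transp_product N \<alpha> k"

subsection \<open>Visible indices and the value of \<open>\<sigma>\<^sub>k N\<close>\<close>

definition visible :: "nat \<Rightarrow> nat \<Rightarrow> bool" where
  "visible k i \<longleftrightarrow> 1 \<le> i \<and> i \<le> k \<and> (\<forall>j\<in>{1..m}. \<alpha> j = \<alpha> i \<longrightarrow> j = i \<or> k < j)
     \<and> \<not> (\<exists>p q. 1 \<le> p \<and> p < i \<and> i < q \<and> q \<le> k \<and> \<alpha> p = \<alpha> q)"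

definition visible_top :: "nat \<Rightarrow> nat" where
  "visible_top k = (if {i. visible k i} = {} then N else \<alpha> (Max {i. visible k i}))"

lemma visibleD_range: "visible k i \<Longrightarrow> 1 \<le> i \<and> i \<le> k"
  by (simp add: visible_def)

lemma visibleD_partner: "visible k i \<Longrightarrow> j \<in> {1..m} \<Longrightarrow> \<alpha> j = \<alpha> i \<Longrightarrow> j = i \<or> k < j"
  unfolding visible_def by blast

lemma visibleD_unenclosed:
  "visible k i \<Longrightarrow> 1 \<le> p \<Longrightarrow> p < i \<Longrightarrow> i < q \<Longrightarrow> q \<le> k \<Longrightarrow> \<alpha> p = \<alpha> q \<Longrightarrow> False"
  unfolding visible_def by blast

lemma visibleI:
  "1 \<le> i \<Longrightarrow> i \<le> k \<Longrightarrow> (\<And>j. j \<in> {1..m} \<Longrightarrow> \<alpha> j = \<alpha> i \<Longrightarrow> j \<noteq> i \<Longrightarrow> k < j)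
  \<Longrightarrow> (\<And>p q. 1 \<le> p \<Longrightarrow> p < i \<Longrightarrow> i < q \<Longrightarrow> q \<le> k \<Longrightarrow> \<alpha> p = \<alpha> q \<Longrightarrow> False) \<Longrightarrow> visible k i"
  unfolding visible_def by blast

lemma finite_visible: "finite {i. visible k i}"
  by (rule finite_subset[of _ "{..k}"]) (auto dest: visibleD_range)

lemma visible_top_fresh:
  assumes k: "k \<in> {1..m}" and fresh: "\<not> (\<exists>p. 1 \<le> p \<and> p < k \<and> \<alpha> p = \<alpha> k)"
  shows "visible_top k = \<alpha> k"
proof -
  have vk: "visible k k"
  proof (rule visibleI)
    fix j assume "j \<in> {1..m}" "\<alpha> j = \<alpha> k" "j \<noteq> k"
    then show "k < j" using fresh by (cases "j < k") auto
  qed (use k in auto)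
  have "Max {i. visible k i} = k"
    by (rule Max_eqI[OF finite_visible]) (use vk in \<open>auto dest: visibleD_range\<close>)
  then show ?thesis using vk by (auto simp: visible_top_def)
qed

text \<open>Closing the pair \<open>{p,k}\<close> hides everything opened since \<open>p\<close>: the indices visible at time
  \<open>k\<close> are exactly those visible at time \<open>p - 1\<close> (next two lemmas).\<close>
lemma visible_close_imp:
  assumes p: "1 \<le> p" "p < k" "k \<le> m" "\<alpha> p = \<alpha> k" and v: "visible k i"
  shows "visible (p - 1) i"
proof -
  have pm: "p \<in> {1..m}" "k \<in> {1..m}" using p by auto
  have i1: "1 \<le> i" "i \<le> k" using visibleD_range[OF v] by auto
  have "i \<noteq> k" using visibleD_partner[OF v pm(1)] p by auto
  moreover have "i \<noteq> p" using visibleD_partner[OF v pm(2)] p by auto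
  moreover have "\<not> (p < i \<and> i < k)" using visibleD_unenclosed[OF v p(1) _ _ _ p(4)] by auto
  ultimately have ip: "i < p" using i1 by auto
  show ?thesis
  proof (rule visibleI)
    show "1 \<le> i" "i \<le> p - 1" using i1 ip by auto
    fix j assume "j \<in> {1..m}" "\<alpha> j = \<alpha> i" "j \<noteq> i"
    then show "p - 1 < j" using visibleD_partner[OF v, of j] p by auto
  next
    fix p0 q0 assume q: "1 \<le> p0" "p0 < i" "i < q0" "q0 \<le> p - 1" "\<alpha> p0 = \<alpha> q0"
    have "q0 \<le> k" using q(4) p(2) by linarith
    with q show False using visibleD_unenclosed[OF v] by blast
  qed
qed

lemma visible_close_rev:
  assumes p: "1 \<le> p" "p < k" "k \<le> m" "\<alpha> p = \<alpha> k" and v: "visible (p - 1) i"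
  shows "visible k i"
proof -
  have ip: "i < p" "1 \<le> i" using visibleD_range[OF v] p by auto
  have pm: "p \<in> {1..m}" "k \<in> {1..m}" and im: "i \<in> {1..m}" using ip p by auto
  show ?thesis
  proof (rule visibleI)
    show "1 \<le> i" "i \<le> k" using ip p by auto
  next
    fix j assume j: "j \<in> {1..m}" "\<alpha> j = \<alpha> i" "j \<noteq> i"
    have "p \<le> j" using visibleD_partner[OF v j(1,2)] j by auto
    moreover have "j \<noteq> p" "j \<noteq> k" using at_most_two[OF im pm] j ip p by auto
    moreover have "\<not> (p < j \<and> j < k)" using no_crossing[of i p j k] j ip p by auto
    ultimately show "k < j" by auto
  next
    fix p0 q0 assume q: "1 \<le> p0" "p0 < i" "i < q0" "q0 \<le> k" "\<alpha> p0 = \<alpha> q0"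
    have "\<not> q0 \<le> p - 1" using visibleD_unenclosed[OF v q(1,2,3) _ q(5)] by auto
    moreover have q0m: "p0 \<in> {1..m}" "q0 \<in> {1..m}" using q ip p by auto
    moreover have "q0 \<noteq> p" "q0 \<noteq> k"
      using at_most_two[OF q0m(1) pm] at_most_two[OF q0m(1) pm(2,1)] q ip p by auto
    moreover have "\<not> (p < q0 \<and> q0 < k)"
    proof
      assume "p < q0 \<and> q0 < k"
      then show False using no_crossing[of p0 p q0 k] q ip p by auto
    qed
    ultimately show False using q by auto
  qed
qed

theorem sigma_prefix_N: "k \<le> m \<Longrightarrow> sigma k N = visible_top k"
proof (induction k rule: less_induct)
  case (less k)
  show ?case
  proof (cases k)
    case 0
    then show ?thesis by (simp add: transp_product_0 visible_top_def visible_def)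
  next
    case (Suc k')
    have km: "k \<in> {1..m}" using less Suc by simp
    have aN: "\<alpha> k \<noteq> N" using alpha_ne_N[OF km] .
    have first: "sigma k N = sigma k' (\<alpha> k)" using Suc by (simp add: transp_product_Suc)
    show ?thesis
    proof (cases "\<exists>p. 1 \<le> p \<and> p < k \<and> \<alpha> p = \<alpha> k")
      case False
      have "sigma k' (\<alpha> k) = sigma 0 (\<alpha> k)"
        by (rule transp_product_skip) (use aN False Suc in auto)
      then show ?thesis using first visible_top_fresh[OF km False] by (simp add: transp_product_0)
    next
      case True
      then obtain p where p: "1 \<le> p" "p < k" "\<alpha> p = \<alpha> k" by blast
      have pm: "p \<in> {1..m}" using p km by simp
      have "\<alpha> i \<noteq> \<alpha> k" if "p < i" "i \<le> k'" for i
        using at_most_two[OF pm km, of i] p that Suc km by auto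
      then have "sigma k' (\<alpha> k) = sigma p (\<alpha> k)"
        by (intro transp_product_skip) (use aN p Suc in auto)
      also have "\<dots> = sigma (p - 1) N" using p by (cases p) (auto simp: transp_product_Suc)
      also have "\<dots> = visible_top (p - 1)" using less.IH[of "p - 1"] p less.prems by simp
      also have "\<dots> = visible_top k"
      proof -
        have "{i. visible k i} = {i. visible (p - 1) i}"
          using visible_close_imp[OF p(1,2) _ p(3)] visible_close_rev[OF p(1,2) _ p(3)]
            less.prems by blast
        then show ?thesis by (simp only: visible_top_def)
      qed
      finally show ?thesis using first by simp
    qed
  qed
qed

text \<open>A point \<open>\<alpha>\<^sub>r\<close> is moved only by the factors involving it; if \<open>r\<close> is its last
  occurrence, \<open>a\<^sub>r\<close> sends it to \<open>N\<close>, which \<open>\<sigma>\<^sub>r\<^sub>-\<^sub>1\<close> then moves on.\<close>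
lemma sigma_last_occurrence:
  assumes r: "r \<in> {1..m}" and last: "\<forall>i. r < i \<and> i \<le> m \<longrightarrow> \<alpha> i \<noteq> \<alpha> r"
  shows "sigma m (\<alpha> r) = visible_top (r - 1)"
proof -
  have aN: "\<alpha> r \<noteq> N" using alpha_ne_N[OF r] .
  have "sigma m (\<alpha> r) = sigma r (\<alpha> r)" by (rule transp_product_skip) (use aN last r in auto)
  also have "\<dots> = sigma (r - 1) N" using r by (cases r) (auto simp: transp_product_Suc)
  also have "\<dots> = visible_top (r - 1)" by (rule sigma_prefix_N) (use r in auto)
  finally show ?thesis .
qed

lemma sigma_unused: "v \<noteq> N \<Longrightarrow> \<forall>i\<in>{1..m}. \<alpha> i \<noteq> v \<Longrightarrow> sigma m v = v"
  using transp_product_skip[of v N 0 m \<alpha>] by (auto simp: transp_product_0)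

definition singleton :: "nat \<Rightarrow> bool" where
  "singleton i \<longleftrightarrow> i \<in> {1..m} \<and> (\<forall>k\<in>{1..m}. \<alpha> k = \<alpha> i \<longrightarrow> k = i)"

definition arc :: "nat \<Rightarrow> nat \<Rightarrow> bool" where
  "arc p r \<longleftrightarrow> 1 \<le> p \<and> p < r \<and> r \<le> m \<and> \<alpha> p = \<alpha> r"

definition enclosed :: "nat \<Rightarrow> bool" where
  "enclosed i \<longleftrightarrow> (\<exists>p q. arc p q \<and> p < i \<and> i < q)"

definition outer :: "nat set" where
  "outer = {i. singleton i \<and> \<not> enclosed i}"

definition direct_inner :: "nat \<Rightarrow> nat \<Rightarrow> nat set" where
  "direct_inner p r = {j. singleton j \<and> p < j \<and> j < r \<and>
     \<not> (\<exists>p' q'. arc p' q' \<and> p < p' \<and> p' < j \<and> j < q' \<and> q' < r)}"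

lemma singletonD: "singleton i \<Longrightarrow> k \<in> {1..m} \<Longrightarrow> \<alpha> k = \<alpha> i \<Longrightarrow> k = i"
  by (simp add: singleton_def)

lemma arc_partner:
  assumes "arc p r" "k \<in> {1..m}" "\<alpha> k = \<alpha> p"
  shows "k = p \<or> k = r"
  using assms at_most_two[of p r k] by (auto simp: arc_def)

lemma finite_outer: "finite outer"
  by (rule finite_subset[of _ "{1..m}"]) (auto simp: outer_def singleton_def)

lemma finite_direct_inner: "finite (direct_inner p r)"
  by (rule finite_subset[of _ "{p<..<r}"]) (auto simp: direct_inner_def)

lemma inj_on_singletons: "\<forall>i\<in>S. singleton i \<Longrightarrow> inj_on \<alpha> S"
  unfolding inj_on_def singleton_def by metis

text \<open>Visibility just before position \<open>j\<close> is decided by the arcs reaching over \<open>j\<close>: if no arc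
  starting after \<open>lo\<close> runs from before \<open>j\<close> to \<open>j\<close> or beyond, an index beyond \<open>lo\<close> visible at
  time \<open>j - 1\<close> is a singleton not enclosed by any arc starting after \<open>lo\<close>.\<close>
lemma visible_unblocked:
  assumes v: "visible (j - 1) i" and j: "j \<le> Suc m" and lo: "lo < i"
    and barrier: "\<And>a b. arc a b \<Longrightarrow> lo < a \<Longrightarrow> a < j \<Longrightarrow> j \<le> b \<Longrightarrow> False"
  shows "singleton i \<and> \<not> (\<exists>a b. arc a b \<and> lo < a \<and> a < i \<and> i < b)"
proof -
  have ij: "1 \<le> i" "i < j" using visibleD_range[OF v] by auto
  have "singleton i" unfolding singleton_def
  proof (intro conjI ballI impI)
    show "i \<in> {1..m}" using ij j by auto
    fix k assume k: "k \<in> {1..m}" "\<alpha> k = \<alpha> i"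
    show "k = i"
    proof (rule ccontr)
      assume "k \<noteq> i"
      then have "j \<le> k" using visibleD_partner[OF v k] by auto
      moreover have "arc i k" using k ij \<open>j \<le> k\<close> by (auto simp: arc_def)
      ultimately show False using barrier lo ij by blast
    qed
  qed
  moreover have "\<not> (\<exists>a b. arc a b \<and> lo < a \<and> a < i \<and> i < b)"
  proof
    assume "\<exists>a b. arc a b \<and> lo < a \<and> a < i \<and> i < b"
    then obtain a b where ab: "arc a b" "lo < a" "a < i" "i < b" by blast
    have "1 \<le> a" "\<alpha> a = \<alpha> b" using ab(1) by (auto simp: arc_def)
    then have "\<not> b \<le> j - 1" using visibleD_unenclosed[OF v _ ab(3,4)] by blast
    then have "j \<le> b" by linarith
    then show False using barrier[OF ab(1,2)] ab ij by auto
  qed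
  ultimately show ?thesis ..
qed

lemma no_arc_over_outer:
  assumes j: "j = Suc m \<or> j \<in> outer" and ab: "arc a b" "a < j" "j \<le> b"
  shows False
proof -
  have "j \<in> outer" using j ab by (auto simp: arc_def)
  moreover have "b \<noteq> j" using singletonD[of j a] ab \<open>j \<in> outer\<close> by (auto simp: outer_def arc_def)
  ultimately have "j \<in> outer" "j < b" using ab by auto
  then show False using ab by (auto simp: outer_def enclosed_def)
qed

text \<open>Inside an arc \<open>{p,r}\<close>, no arc starting after \<open>p\<close> reaches over \<open>r\<close> or over a direct inner
  singleton: it would cross or coincide with \<open>{p,r}\<close>, end at a singleton, or enclose it.\<close>
lemma no_arc_over_direct_inner:
  assumes pr: "arc p r" and j: "j = r \<or> j \<in> direct_inner p r"
    and ab: "arc a b" "p < a" "a < j" "j \<le> b"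
  shows False
proof -
  have pr': "p < r" "\<alpha> p = \<alpha> r" using pr by (auto simp: arc_def)
  have jr: "j \<le> r" using j by (auto simp: direct_inner_def)
  have a_m: "a \<in> {1..m}" "\<alpha> a = \<alpha> b" using ab(1) by (auto simp: arc_def)
  have "b \<noteq> j"
  proof
    assume "b = j"
    show False using j
    proof
      assume "j = r"
      then show False using arc_partner[OF pr a_m(1)] a_m(2) \<open>b = j\<close> ab pr' by auto
    next
      assume "j \<in> direct_inner p r"
      then show False using singletonD[of j a] a_m \<open>b = j\<close> ab by (auto simp: direct_inner_def)
    qed
  qed
  then consider "b < r" | "b = r" | "r < b" by linarith
  then show False
  proof cases
    case 1 then show ?thesis using j ab \<open>b \<noteq> j\<close> by (auto simp: direct_inner_def)
  next
    case 2
    then have "\<alpha> a = \<alpha> p" using a_m(2) pr' by simp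
    then show ?thesis using arc_partner[OF pr a_m(1)] ab jr by auto
  next
    case 3 then show ?thesis using no_crossing[of p a r b] ab jr pr pr' by (auto simp: arc_def)
  qed
qed

lemma visible_outer:
  assumes j: "j = Suc m \<or> j \<in> outer"
  shows "visible (j - 1) i \<longleftrightarrow> i \<in> outer \<and> i < j"
proof
  assume v: "visible (j - 1) i"
  have ij: "0 < i" "i < j" using visibleD_range[OF v] by auto
  have unblocked: "singleton i \<and> \<not> (\<exists>a b. arc a b \<and> 0 < a \<and> a < i \<and> i < b)"
  proof (rule visible_unblocked[OF v _ ij(1)])
    show "j \<le> Suc m" using j by (auto simp: outer_def singleton_def)
    show False if "arc a b" "0 < a" "a < j" "j \<le> b" for a b
      using no_arc_over_outer[OF j that(1,3,4)] .
  qed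
  have "\<not> enclosed i"
  proof
    assume "enclosed i"
    then obtain a b where ab: "arc a b" "a < i" "i < b" by (auto simp: enclosed_def)
    then have "0 < a" by (simp add: arc_def)
    then show False using unblocked ab by blast
  qed
  then show "i \<in> outer \<and> i < j" using unblocked ij by (simp add: outer_def)
next
  assume i: "i \<in> outer \<and> i < j"
  show "visible (j - 1) i"
  proof (rule visibleI)
    fix p q assume pq: "1 \<le> p" "p < i" "i < q" "q \<le> j - 1" "\<alpha> p = \<alpha> q"
    have "q \<le> m" using pq(4) j by (auto simp: outer_def singleton_def)
    then have "arc p q" using pq by (auto simp: arc_def)
    then show False using i pq by (auto simp: outer_def enclosed_def)
  qed (use i in \<open>auto simp: outer_def singleton_def\<close>)
qed

lemma visible_arc_left:
  assumes pr: "arc p r" and k: "p \<le> k" "k < r"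
  shows "visible k p"
proof (rule visibleI)
  show "1 \<le> p" "p \<le> k" using pr k by (auto simp: arc_def)
  show "k < j" if "j \<in> {1..m}" "\<alpha> j = \<alpha> p" "j \<noteq> p" for j
    using arc_partner[OF pr that(1,2)] that(3) k by auto
  fix p0 q0 assume "1 \<le> p0" "p0 < p" "p < q0" "q0 \<le> k" "\<alpha> p0 = \<alpha> q0"
  then show False using no_crossing[of p0 p q0 r] pr k by (auto simp: arc_def)
qed

lemma visible_direct_inner:
  assumes pr: "arc p r" and i: "i \<in> direct_inner p r" and k: "i \<le> k" "k < r"
  shows "visible k i"
proof (rule visibleI)
  have si: "singleton i" and pi: "p < i"
    and direct: "\<And>p' q'. arc p' q' \<Longrightarrow> p < p' \<Longrightarrow> p' < i \<Longrightarrow> i < q' \<Longrightarrow> q' < r \<Longrightarrow> False"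
    using i by (auto simp: direct_inner_def)
  show "1 \<le> i" "i \<le> k" using pi pr k by (auto simp: arc_def)
  show "k < j" if "j \<in> {1..m}" "\<alpha> j = \<alpha> i" "j \<noteq> i" for j using singletonD[OF si] that by auto
  fix p0 q0 assume q: "1 \<le> p0" "p0 < i" "i < q0" "q0 \<le> k" "\<alpha> p0 = \<alpha> q0"
  have arc0: "arc p0 q0" using q k pr by (auto simp: arc_def)
  consider "p < p0" | "p0 = p" | "p0 < p" by linarith
  then show False
  proof cases
    case 1 then show ?thesis using direct[OF arc0] q k by auto
  next
    case 2 then show ?thesis using arc_partner[OF pr, of q0] arc0 q pi k by (auto simp: arc_def)
  next
    case 3 then show ?thesis using no_crossing[of p0 p q0 r] q pi k pr by (auto simp: arc_def)
  qed
qed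

lemma visible_inside_arc:
  assumes pr: "arc p r" and j: "j = r \<or> j \<in> direct_inner p r" and pi: "p < i"
  shows "visible (j - 1) i \<longleftrightarrow> i \<in> direct_inner p r \<and> i < j"
proof
  assume "i \<in> direct_inner p r \<and> i < j"
  then show "visible (j - 1) i"
    using visible_direct_inner[OF pr, of i "j - 1"] j by (auto simp: direct_inner_def)
next
  assume v: "visible (j - 1) i"
  have jr: "j \<le> r" "r \<le> m" using j pr by (auto simp: direct_inner_def arc_def)
  have "i < j" using visibleD_range[OF v] by auto
  have "singleton i \<and> \<not> (\<exists>a b. arc a b \<and> p < a \<and> a < i \<and> i < b)"
  proof (rule visible_unblocked[OF v _ pi])
    show "j \<le> Suc m" using jr by simp
    show False if "arc a b" "p < a" "a < j" "j \<le> b" for a b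
      using no_arc_over_direct_inner[OF pr j that] .
  qed
  then show "i \<in> direct_inner p r \<and> i < j" using pi \<open>i < j\<close> jr by (auto simp: direct_inner_def)
qed

lemma visible_top_outer:
  assumes "j = Suc m \<or> j \<in> outer"
  shows "visible_top (j - 1) = (if \<exists>i\<in>outer. i < j then \<alpha> (Max {i\<in>outer. i < j}) else N)"
proof -
  have "{i. visible (j - 1) i} = {i\<in>outer. i < j}" using visible_outer[OF assms] by blast
  then show ?thesis unfolding visible_top_def by auto
qed

lemma visible_top_arc:
  assumes pr: "arc p r" and j: "j = r \<or> j \<in> direct_inner p r"
  shows "visible_top (j - 1) =
    (if \<exists>i\<in>direct_inner p r. i < j then \<alpha> (Max {i\<in>direct_inner p r. i < j}) else \<alpha> r)"
proof -
  have vp: "visible (j - 1) p"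
    using visible_arc_left[OF pr] pr j by (auto simp: arc_def direct_inner_def)
  have "Max {i. visible (j - 1) i} =
      (if {i\<in>direct_inner p r. i < j} = {} then p else Max {i\<in>direct_inner p r. i < j})"
  proof (rule Max_above_pivot[OF finite_visible vp])
    show "visible (j - 1) i \<longleftrightarrow> i \<in> {i\<in>direct_inner p r. i < j}" if "p < i" for i
      using visible_inside_arc[OF pr j that] by simp
  qed (auto simp: direct_inner_def)
  moreover have "{i. visible (j - 1) i} \<noteq> {}" using vp by auto
  moreover have "\<alpha> p = \<alpha> r" using pr by (simp add: arc_def)
  ultimately show ?thesis unfolding visible_top_def by auto
qed

abbreviation P :: "nat set set" where
  "P \<equiv> kernel_partition \<alpha> m"

lemma block_in_P: "j \<in> {1..m} \<Longrightarrow> {k\<in>{1..m}. \<alpha> k = \<alpha> j} \<in> P"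
  unfolding kernel_partition_def by blast

lemma P_block: "B \<in> P \<Longrightarrow> \<exists>j\<in>{1..m}. B = {k\<in>{1..m}. \<alpha> k = \<alpha> j}"
  unfolding kernel_partition_def by blast

lemma P_block_members:
  assumes "B \<in> P" "x \<in> B" "y \<in> B"
  shows "x \<in> {1..m}" "\<alpha> x = \<alpha> y"
  using P_block[OF assms(1)] assms(2,3) by auto

lemma arc_in_P: assumes "arc p q" shows "{p, q} \<in> P"
proof -
  have "{k\<in>{1..m}. \<alpha> k = \<alpha> p} = {p, q}"
    using arc_partner[OF assms] assms by (auto simp: arc_def)
  moreover have "p \<in> {1..m}" using assms by (auto simp: arc_def)
  ultimately show ?thesis using block_in_P by metis
qed

lemma two_element_block_arc:
  assumes B: "B \<in> P" "card B = 2"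
  obtains p r where "B = {p, r}" "arc p r"
proof -
  obtain x y where xy: "B = {x, y}" "x \<noteq> y" using B(2) by (auto simp: card_2_iff)
  have "x \<in> {1..m}" "y \<in> {1..m}" "\<alpha> x = \<alpha> y" using P_block_members[OF B(1)] xy by auto
  then have "arc (min x y) (max x y)" using xy(2) by (auto simp: arc_def min_def max_def)
  moreover have "B = {min x y, max x y}" using xy by (auto simp: min_def max_def)
  ultimately show ?thesis using that by blast
qed

lemma singleton_or_arc:
  assumes "j \<in> {1..m}"
  shows "singleton j \<or> (\<exists>p r. arc p r \<and> \<alpha> r = \<alpha> j)"
proof (cases "singleton j")
  case False
  then obtain k where k: "k \<in> {1..m}" "\<alpha> k = \<alpha> j" "k \<noteq> j" using assms by (auto simp: singleton_def)
  then have "arc (min j k) (max j k)" "\<alpha> (max j k) = \<alpha> j"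
    using assms by (auto simp: arc_def min_def max_def)
  then show ?thesis by blast
qed simp

lemma singleton_block_iff: "{i} \<in> P \<longleftrightarrow> singleton i"
proof
  assume "{i} \<in> P"
  then obtain j where j: "j \<in> {1..m}" "{i} = {k\<in>{1..m}. \<alpha> k = \<alpha> j}" using P_block by blast
  then have i: "i \<in> {1..m}" "\<alpha> i = \<alpha> j" by blast+
  have "k = i" if "k \<in> {1..m}" "\<alpha> k = \<alpha> i" for k
  proof -
    have "k \<in> {k\<in>{1..m}. \<alpha> k = \<alpha> j}" using that i by simp
    then show ?thesis using j(2) by blast
  qed
  then show "singleton i" using i unfolding singleton_def by blast
next
  assume "singleton i"
  then have "{k\<in>{1..m}. \<alpha> k = \<alpha> i} = {i}" "i \<in> {1..m}" unfolding singleton_def by blast+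
  then show "{i} \<in> P" using block_in_P[of i] by simp
qed

lemma inner_block_arc: "p < r \<Longrightarrow> inner_block {i} {p, r} \<longleftrightarrow> p < i \<and> i < r"
  unfolding inner_block_def by auto

lemma enclosed_iff_inner_block: "(\<exists>B\<in>P. card B = 2 \<and> inner_block {i} B) \<longleftrightarrow> enclosed i"
proof
  assume "\<exists>B\<in>P. card B = 2 \<and> inner_block {i} B"
  then obtain B where B: "B \<in> P" "card B = 2" "inner_block {i} B" by blast
  then obtain p r where "B = {p, r}" "arc p r" using two_element_block_arc by blast
  moreover from this have "p < i" "i < r" using B(3) inner_block_arc[of p r i] by (auto simp: arc_def)
  ultimately show "enclosed i" unfolding enclosed_def by blast
next
  assume "enclosed i"
  then obtain p q where "arc p q" "p < i" "i < q" unfolding enclosed_def by blast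
  moreover from this have "card {p, q} = 2" "inner_block {i} {p, q}" "{p, q} \<in> P"
    using inner_block_arc[of p q i] arc_in_P by (auto simp: arc_def)
  ultimately show "\<exists>B\<in>P. card B = 2 \<and> inner_block {i} B" by blast
qed

lemma outer_singletons_eq: "outer_singletons P = outer"
  unfolding outer_singletons_def outer_def using singleton_block_iff enclosed_iff_inner_block by auto

lemma intermediate_block_iff:
  assumes j: "p < j" "j < r"
  shows "(\<exists>B'\<in>P. inner_block {j} B' \<and> inner_block B' {p, r}) \<longleftrightarrow>
    (\<exists>p' q'. arc p' q' \<and> p < p' \<and> p' < j \<and> j < q' \<and> q' < r)"
proof
  assume "\<exists>B'\<in>P. inner_block {j} B' \<and> inner_block B' {p, r}"
  then obtain B' where B': "B' \<in> P" "inner_block {j} B'" "inner_block B' {p, r}" by blast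
  obtain x y where xy: "x \<in> B'" "x < j" "y \<in> B'" "j < y"
    using B'(2) unfolding inner_block_def by auto
  have "p < x" "y < r" using B'(3) xy j unfolding inner_block_def by fastforce+
  moreover have "arc x y"
    using P_block_members[OF B'(1) xy(1,3)] P_block_members[OF B'(1) xy(3,1)] xy j
    by (auto simp: arc_def)
  ultimately show "\<exists>p' q'. arc p' q' \<and> p < p' \<and> p' < j \<and> j < q' \<and> q' < r" using xy by blast
next
  assume "\<exists>p' q'. arc p' q' \<and> p < p' \<and> p' < j \<and> j < q' \<and> q' < r"
  then obtain p' q' where q: "arc p' q'" "p < p'" "p' < j" "j < q'" "q' < r" by blast
  have "inner_block {j} {p', q'}" using inner_block_arc[of p' q' j] q by (simp add: arc_def)
  moreover have "inner_block {p', q'} {p, r}" unfolding inner_block_def using q by auto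
  ultimately show "\<exists>B'\<in>P. inner_block {j} B' \<and> inner_block B' {p, r}" using arc_in_P[OF q(1)] by blast
qed

lemma direct_inner_singletons_eq:
  assumes pr: "arc p r"
  shows "direct_inner_singletons P {p, r} = direct_inner p r"
proof -
  have "p < r" using pr by (simp add: arc_def)
  then show ?thesis
    unfolding direct_inner_singletons_def direct_inner_block_def direct_inner_def
    using singleton_block_iff inner_block_arc[of p r] intermediate_block_iff by blast
qed

lemma set_outer_cycle: "set (outer_cycle N \<alpha> P) = insert N (\<alpha> ` outer)"
  by (simp add: outer_cycle_def outer_singletons_eq finite_outer)

lemma set_block_cycle:
  "arc p r \<Longrightarrow> set (block_cycle \<alpha> P {p, r}) = insert (\<alpha> r) (\<alpha> ` direct_inner p r)"
  by (simp add: block_cycle_def direct_inner_singletons_eq finite_direct_inner arc_def)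

text \<open>A singleton enclosed by some arc is a direct inner singleton of the innermost one.\<close>
lemma enclosed_direct_inner:
  assumes sj: "singleton j" and ej: "enclosed j"
  obtains p r where "arc p r" "j \<in> direct_inner p r"
proof -
  define E where "E = {p. \<exists>q. arc p q \<and> p < j \<and> j < q}"
  have finE: "finite E" by (rule finite_subset[of _ "{..j}"]) (auto simp: E_def)
  have "E \<noteq> {}" using ej by (auto simp: enclosed_def E_def)
  then have "Max E \<in> E" using Max_in[OF finE] by blast
  then obtain r where r: "arc (Max E) r" "Max E < j" "j < r" by (auto simp: E_def)
  have "\<not> (\<exists>p' q'. arc p' q' \<and> Max E < p' \<and> p' < j \<and> j < q' \<and> q' < r)"
  proof
    assume "\<exists>p' q'. arc p' q' \<and> Max E < p' \<and> p' < j \<and> j < q' \<and> q' < r"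
    then obtain p' where "p' \<in> E" "Max E < p'" by (auto simp: E_def)
    then show False using Max_ge[OF finE] by fastforce
  qed
  then have "j \<in> direct_inner (Max E) r" using sj r by (simp add: direct_inner_def)
  then show ?thesis using that r(1) by blast
qed

subsection \<open>The cycles of \<open>\<sigma>\<^sub>m\<close>\<close>

lemma sigma_singleton: "singleton j \<Longrightarrow> sigma m (\<alpha> j) = visible_top (j - 1)"
  by (rule sigma_last_occurrence) (auto simp: singleton_def)

lemma sigma_arc_right:
  assumes pr: "arc p r"
  shows "sigma m (\<alpha> r) = visible_top (r - 1)"
proof (rule sigma_last_occurrence)
  show "r \<in> {1..m}" using pr by (auto simp: arc_def)
  show "\<forall>i. r < i \<and> i \<le> m \<longrightarrow> \<alpha> i \<noteq> \<alpha> r"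
  proof (intro allI impI notI)
    fix i assume i: "r < i \<and> i \<le> m" and "\<alpha> i = \<alpha> r"
    then have "i \<in> {1..m}" "\<alpha> i = \<alpha> p" using pr by (auto simp: arc_def)
    from arc_partner[OF pr this] show False using i pr by (auto simp: arc_def)
  qed
qed

lemma sigma_N: "sigma m N = (if outer = {} then N else \<alpha> (Max outer))"
proof -
  have "{i\<in>outer. i < Suc m} = outer" by (auto simp: outer_def singleton_def)
  then show ?thesis using sigma_prefix_N[of m] visible_top_outer[of "Suc m"] by auto
qed

lemma outer_cycle_is_cycle:
  assumes ne: "outer \<noteq> {}"
  shows "has_cycle (sigma m) (outer_cycle N \<alpha> P)"
  unfolding outer_cycle_def outer_singletons_eq
proof (rule has_cycle_predecessor[OF finite_outer ne])
  show "inj_on \<alpha> outer" by (rule inj_on_singletons) (auto simp: outer_def)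
  show "N \<notin> \<alpha> ` outer" using alpha_ne_N by (force simp: outer_def singleton_def)
  show "sigma m N = \<alpha> (Max outer)" using sigma_N ne by simp
  show "\<forall>j\<in>outer. sigma m (\<alpha> j) = (if \<exists>i\<in>outer. i < j then \<alpha> (Max {i\<in>outer. i < j}) else N)"
  proof
    fix j assume j: "j \<in> outer"
    then have "singleton j" by (simp add: outer_def)
    then show "sigma m (\<alpha> j) = (if \<exists>i\<in>outer. i < j then \<alpha> (Max {i\<in>outer. i < j}) else N)"
      using sigma_singleton visible_top_outer j by simp
  qed
qed

lemma block_cycle_is_cycle:
  assumes pr: "arc p r" and ne: "direct_inner p r \<noteq> {}"
  shows "has_cycle (sigma m) (block_cycle \<alpha> P {p, r})"
proof -
  have "Max {p, r} = r" using pr by (simp add: arc_def)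
  then have "block_cycle \<alpha> P {p, r} = \<alpha> r # rev (map \<alpha> (sorted_list_of_set (direct_inner p r)))"
    by (simp add: block_cycle_def direct_inner_singletons_eq[OF pr])
  moreover have "has_cycle (sigma m) \<dots>"
  proof (rule has_cycle_predecessor[OF finite_direct_inner ne])
    show "inj_on \<alpha> (direct_inner p r)" by (rule inj_on_singletons) (auto simp: direct_inner_def)
    show "\<alpha> r \<notin> \<alpha> ` direct_inner p r"
    proof
      assume "\<alpha> r \<in> \<alpha> ` direct_inner p r"
      then obtain j where j: "j \<in> direct_inner p r" "\<alpha> r = \<alpha> j" by blast
      have "r \<in> {1..m}" using pr by (simp add: arc_def)
      then have "r = j" using singletonD[of j r] j by (simp add: direct_inner_def)
      then show False using j(1) by (simp add: direct_inner_def)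
    qed
    have "{i\<in>direct_inner p r. i < r} = direct_inner p r" by (auto simp: direct_inner_def)
    moreover have "\<exists>i\<in>direct_inner p r. i < r" using ne by (auto simp: direct_inner_def)
    ultimately show "sigma m (\<alpha> r) = \<alpha> (Max (direct_inner p r))"
      using sigma_arc_right[OF pr] visible_top_arc[OF pr, of r] by simp
    show "\<forall>j\<in>direct_inner p r. sigma m (\<alpha> j) = (if \<exists>i\<in>direct_inner p r. i < j
        then \<alpha> (Max {i\<in>direct_inner p r. i < j}) else \<alpha> r)"
    proof
      fix j assume j: "j \<in> direct_inner p r"
      then have "singleton j" by (simp add: direct_inner_def)
      then show "sigma m (\<alpha> j) = (if \<exists>i\<in>direct_inner p r. i < j
          then \<alpha> (Max {i\<in>direct_inner p r. i < j}) else \<alpha> r)"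
        using sigma_singleton visible_top_arc[OF pr] j by simp
    qed
  qed
  ultimately show ?thesis by simp
qed

lemma sigma_fixed_point:
  assumes xo: "x \<notin> set (outer_cycle N \<alpha> P)"
    and xb: "\<forall>B\<in>P. card B = 2 \<and> direct_inner_singletons P B \<noteq> {} \<longrightarrow> x \<notin> set (block_cycle \<alpha> P B)"
  shows "sigma m x = x"
proof -
  have not_in_block: "x \<notin> insert (\<alpha> r) (\<alpha> ` direct_inner p r)"
    if pr: "arc p r" "direct_inner p r \<noteq> {}" for p r
    using xb arc_in_P[OF pr(1)] direct_inner_singletons_eq[OF pr(1)] set_block_cycle[OF pr(1)] pr
    by (auto simp: arc_def)
  have xN: "x \<noteq> N" and x_outer: "x \<notin> \<alpha> ` outer" using xo set_outer_cycle by auto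
  show ?thesis
  proof (cases "\<exists>j\<in>{1..m}. \<alpha> j = x")
    case False
    then show ?thesis using sigma_unused xN by blast
  next
    case True
    then obtain j where j: "j \<in> {1..m}" "\<alpha> j = x" by blast
    consider "singleton j" "enclosed j" | "singleton j" "\<not> enclosed j" | p r where "arc p r" "\<alpha> r = x"
      using singleton_or_arc[OF j(1)] j(2) by blast
    then show ?thesis
    proof cases
      case 1
      then obtain p r where "arc p r" "j \<in> direct_inner p r" using enclosed_direct_inner by blast
      then show ?thesis using not_in_block j(2) by blast
    next
      case 2
      then show ?thesis using x_outer j(2) by (auto simp: outer_def)
    next
      case (3 p r)
      have "direct_inner p r = {}" using not_in_block[OF 3(1)] 3(2) by blast
      then show ?thesis using sigma_arc_right[OF 3(1)] visible_top_arc[OF 3(1), of r] 3 by simp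
    qed
  qed
qed

theorem cycle_decomposition:
  "(outer_singletons P \<noteq> {} \<longrightarrow> has_cycle (sigma m) (outer_cycle N \<alpha> P))
    \<and> (outer_singletons P = {} \<longrightarrow> sigma m N = N)
    \<and> (\<forall>B\<in>P. card B = 2 \<and> direct_inner_singletons P B \<noteq> {} \<longrightarrow> has_cycle (sigma m) (block_cycle \<alpha> P B))
    \<and> (\<forall>x\<in>{1..N}. x \<notin> set (outer_cycle N \<alpha> P)
          \<and> (\<forall>B\<in>P. card B = 2 \<and> direct_inner_singletons P B \<noteq> {} \<longrightarrow> x \<notin> set (block_cycle \<alpha> P B))
          \<longrightarrow> sigma m x = x)"
proof (intro conjI impI ballI)
  assume "outer_singletons P \<noteq> {}"
  then show "has_cycle (sigma m) (outer_cycle N \<alpha> P)"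
    using outer_cycle_is_cycle outer_singletons_eq by simp
next
  assume "outer_singletons P = {}"
  then show "sigma m N = N" using sigma_N outer_singletons_eq by simp
next
  fix B assume B: "B \<in> P" "card B = 2 \<and> direct_inner_singletons P B \<noteq> {}"
  then obtain p r where pr: "B = {p, r}" "arc p r" using two_element_block_arc by blast
  then show "has_cycle (sigma m) (block_cycle \<alpha> P B)"
    using block_cycle_is_cycle[OF pr(2)] B(2) direct_inner_singletons_eq[OF pr(2)] by simp
next
  fix x assume "x \<notin> set (outer_cycle N \<alpha> P) \<and>
    (\<forall>B\<in>P. card B = 2 \<and> direct_inner_singletons P B \<noteq> {} \<longrightarrow> x \<notin> set (block_cycle \<alpha> P B))"
  then show "sigma m x = x" using sigma_fixed_point by blast
qed

end

lemma kernel_partition_at_most_two: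
  assumes small: "\<forall>B\<in>kernel_partition \<alpha> m. card B \<le> 2"
    and t: "i \<in> {1..m}" "j \<in> {1..m}" "k \<in> {1..m}" "\<alpha> i = \<alpha> j" "\<alpha> i = \<alpha> k"
  shows "i = j \<or> i = k \<or> j = k"
proof (rule ccontr)
  assume distinct: "\<not> (i = j \<or> i = k \<or> j = k)"
  have "{i, j, k} \<subseteq> {k'\<in>{1..m}. \<alpha> k' = \<alpha> i}" using t by auto
  then have "card {i, j, k} \<le> card {k'\<in>{1..m}. \<alpha> k' = \<alpha> i}" by (intro card_mono) auto
  also have "\<dots> \<le> 2" using small t(1) unfolding kernel_partition_def by blast
  finally show False using distinct by auto
qed

lemma kernel_partition_no_crossing:
  assumes nc: "noncrossing (kernel_partition \<alpha> m)"
    and t: "1 \<le> a" "a < b" "b < c" "c < d" "d \<le> m" "\<alpha> a = \<alpha> c" "\<alpha> b = \<alpha> d"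
    and ab: "\<alpha> a \<noteq> \<alpha> b"
  shows False
proof -
  let ?B = "{k\<in>{1..m}. \<alpha> k = \<alpha> a}" and ?B' = "{k\<in>{1..m}. \<alpha> k = \<alpha> b}"
  have blocks: "?B \<in> kernel_partition \<alpha> m" "?B' \<in> kernel_partition \<alpha> m"
    using t unfolding kernel_partition_def by auto
  have mem: "a \<in> ?B" "c \<in> ?B" "b \<in> ?B'" "d \<in> ?B'" and "b \<notin> ?B" using t ab by auto
  then have "?B \<noteq> ?B'" by blast
  from nc[unfolded noncrossing_def, rule_format, OF blocks this]
  show False using t(2-4) mem by blast
qed

lemma nc_transpositions_if_NC12:
  assumes lt: "\<forall>i\<in>{1..m}. \<alpha> i < N" and NC: "kernel_partition \<alpha> m \<in> NC12 m"
  shows "nc_transpositions N m \<alpha>"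
proof -
  have small: "\<forall>B\<in>kernel_partition \<alpha> m. card B \<le> 2" and nc: "noncrossing (kernel_partition \<alpha> m)"
    using NC by (auto simp: NC12_def)
  show ?thesis
  proof
    show "\<alpha> i \<noteq> N" if "i \<in> {1..m}" for i using lt that by auto
    show "i = j \<or> i = k \<or> j = k"
      if "i \<in> {1..m}" "j \<in> {1..m}" "k \<in> {1..m}" "\<alpha> i = \<alpha> j" "\<alpha> i = \<alpha> k" for i j k
      using kernel_partition_at_most_two[OF small that] .
  next
    fix a b c d
    assume t: "1 \<le> a" "a < b" "b < c" "c < d" "d \<le> m" "\<alpha> a = \<alpha> c" "\<alpha> b = \<alpha> d"
    have "\<alpha> a \<noteq> \<alpha> b" using kernel_partition_at_most_two[OF small, of a b c] t by auto
    then show False using kernel_partition_no_crossing[OF nc t] by blast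
  qed
qed

theorem lemma6:
  fixes N m :: nat and \<alpha> :: "nat \<Rightarrow> nat"
  assumes "N \<ge> 2"
    and "\<forall>i\<in>{1..m}. 1 \<le> \<alpha> i \<and> \<alpha> i \<le> N - 1"
    and "kernel_partition \<alpha> m \<in> NC12 m"
  defines "\<sigma> \<equiv> transp_product N \<alpha> m"
    and "P \<equiv> kernel_partition \<alpha> m"
  shows "(outer_singletons P \<noteq> {} \<longrightarrow> has_cycle \<sigma> (outer_cycle N \<alpha> P))
    \<and> (outer_singletons P = {} \<longrightarrow> \<sigma> N = N)
    \<and> (\<forall>B\<in>P. card B = 2 \<and> direct_inner_singletons P B \<noteq> {} \<longrightarrow> has_cycle \<sigma> (block_cycle \<alpha> P B))
    \<and> (\<forall>x\<in>{1..N}. x \<notin> set (outer_cycle N \<alpha> P)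
          \<and> (\<forall>B\<in>P. card B = 2 \<and> direct_inner_singletons P B \<noteq> {} \<longrightarrow> x \<notin> set (block_cycle \<alpha> P B))
          \<longrightarrow> \<sigma> x = x)"
proof -
  have "\<forall>i\<in>{1..m}. \<alpha> i < N" using assms(1,2) by fastforce
  then interpret nc_transpositions N m \<alpha> by (rule nc_transpositions_if_NC12[OF _ assms(3)])
  show ?thesis unfolding \<sigma>_def P_def by (rule cycle_decomposition)
qed

end
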